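(* Let $n\ge 2$. For each $(a,b)\in\Omega_n$, the set $L^{(n)}_{(a,b)}:=L(\{1,\omega^a,j,\omega^bj\})$ is a reflection system for $\mathcal{D}_n$, and $$L^{(n)}_{(a,b)}=\{\omega^{ma}\}_{1\le m\le 2n/a}\cup\{\omega^{\ell b}j\}_{1\le \ell\le 2n/b}.$$ Every reflection system for $\mathcal{D}_n$ is equivalent to $L^{(n)}_{(a,b)}$ for some $(a,b)\in\Omega_n$. Moreover $|L^{(n)}_{(a,b)}|=\frac{2n}{a}+\frac{2n}{b}$, and these cardinalities are pairwise different for different $(a,b)\in\Omega_n$.
   Context: $\mathbb{H}$ is the real quaternion algebra with basis $1,i,j,k$. For $n\ge2$ let $\omega:=\cos(\pi/n)+i\sin(\pi/n)\in\mathbb{H}$ (a primitive $2n$-th root of unity) and $\mathcal{D}_n:=\langle\omega,j\rangle$, the dicyclic group of order $4n$. Let $\Omega_n:=\{(a,b): 1\le a\le b\le n,\ a\mid n,\ b\mid n,\ \gcd(a,b)=1\}$. For a group $K$ and $x,y\in K$ put $x\circ y:=xy^{-1}x$; for $X\subseteq K$, $L(X)$ is the smallest subset of $K$ containing $X$ and closed under $\circ$. A reflection system for a finite group $K$ is a subset $L\subseteq K$ generating $K$, closed under $\circ$, and containing $1$. Two reflection systems $L,L'$ for $K$ are equivalent if $L'=\phi(xL)$ or $L'=\phi(Lx)$ for some $x\in L$ and some automorphism $\phi$ of $K$. *)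

theory Defs
  imports Complex_Main
begin

datatype quat = Quat (Re: real) (Im1: real) (Im2: real) (Im3: real)

instantiation quat :: "{one, times, inverse}"
begin
definition one_quat_def: "1 = Quat 1 0 0 0"
definition times_quat_def:
  "x * y = Quat (Re x * Re y - Im1 x * Im1 y - Im2 x * Im2 y - Im3 x * Im3 y)
                (Re x * Im1 y + Im1 x * Re y + Im2 x * Im3 y - Im3 x * Im2 y)
                (Re x * Im2 y - Im1 x * Im3 y + Im2 x * Re y + Im3 x * Im1 y)
                (Re x * Im3 y + Im1 x * Im2 y - Im2 x * Im1 y + Im3 x * Re y)"
definition inverse_quat_def:
  "inverse x = (let r = (Re x)\<^sup>2 + (Im1 x)\<^sup>2 + (Im2 x)\<^sup>2 + (Im3 x)\<^sup>2
                in Quat (Re x / r) (- Im1 x / r) (- Im2 x / r) (- Im3 x / r))"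
definition divide_quat_def: "x div y = x * inverse (y :: quat)"
instance ..
end

instance quat :: monoid_mult
proof
  fix a b c :: quat
  show "a * b * c = a * (b * c)"
    by (cases a; cases b; cases c) (simp add: times_quat_def algebra_simps)
  show "1 * a = a" by (cases a) (simp add: times_quat_def one_quat_def)
  show "a * 1 = a" by (cases a) (simp add: times_quat_def one_quat_def)
qed

definition qi :: quat where "qi = Quat 0 1 0 0"
definition qj :: quat where "qj = Quat 0 0 1 0"

definition omega :: "nat \<Rightarrow> quat" where
  "omega n = Quat (cos (pi / real n)) (sin (pi / real n)) 0 0"

inductive_set qgen :: "quat set \<Rightarrow> quat set" for X where
  one: "1 \<in> qgen X"
| base: "x \<in> X \<Longrightarrow> x \<in> qgen X"
| mult: "x \<in> qgen X \<Longrightarrow> y \<in> qgen X \<Longrightarrow> x * y \<in> qgen X"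
| inv: "x \<in> qgen X \<Longrightarrow> inverse x \<in> qgen X"

definition Dic :: "nat \<Rightarrow> quat set" where
  "Dic n = qgen {omega n, qj}"

definition qcirc :: "quat \<Rightarrow> quat \<Rightarrow> quat" where
  "qcirc x y = x * inverse y * x"

inductive_set Lcl :: "quat set \<Rightarrow> quat set" for X where
  base: "x \<in> X \<Longrightarrow> x \<in> Lcl X"
| circ: "x \<in> Lcl X \<Longrightarrow> y \<in> Lcl X \<Longrightarrow> qcirc x y \<in> Lcl X"

definition reflection_system :: "quat set \<Rightarrow> quat set \<Rightarrow> bool" where
  "reflection_system K L \<longleftrightarrow>
     L \<subseteq> K \<and> qgen L = K \<and> (\<forall>x\<in>L. \<forall>y\<in>L. qcirc x y \<in> L) \<and> 1 \<in> L"

definition group_aut :: "quat set \<Rightarrow> (quat \<Rightarrow> quat) \<Rightarrow> bool" where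
  "group_aut K \<phi> \<longleftrightarrow> bij_betw \<phi> K K \<and> (\<forall>x\<in>K. \<forall>y\<in>K. \<phi> (x * y) = \<phi> x * \<phi> y)"

definition rs_equivalent :: "quat set \<Rightarrow> quat set \<Rightarrow> quat set \<Rightarrow> bool" where
  "rs_equivalent K L L' \<longleftrightarrow>
     (\<exists>x\<in>L. \<exists>\<phi>. group_aut K \<phi> \<and>
        (L' = \<phi> ` ((\<lambda>y. x * y) ` L) \<or> L' = \<phi> ` ((\<lambda>y. y * x) ` L)))"

definition Omega :: "nat \<Rightarrow> (nat \<times> nat) set" where
  "Omega n = {(a, b). 1 \<le> a \<and> a \<le> b \<and> b \<le> n \<and> a dvd n \<and> b dvd n \<and> coprime a b}"

definition Lab :: "nat \<Rightarrow> nat \<Rightarrow> nat \<Rightarrow> quat set" where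
  "Lab n a b = Lcl {1, omega n ^ a, qj, omega n ^ b * qj}"

end

theory Submission
  imports Defs
begin

(* Every element of D_n is \<omega>^k or \<omega>^k j for an integer k read modulo 2n, and on exponents
   x \<circ> y is a point reflection: \<omega>^p \<circ> \<omega>^q = \<omega>^(2p-q) and \<omega>^p j \<circ> \<omega>^q j = \<omega>^(2p-q) j, while a
   mixed pair shifts the exponent of y by n. A set of integers containing 0 and 2n and closed under
   (p, q) \<mapsto> 2p - q is a subgroup d\<int>, so a reflection system containing \<omega>^s j is
   {\<omega>^(ka)} \<union> {\<omega>^(s+kb) j} with a, b dividing n. It generates D_n exactly when gcd(a, b) = 1,
   because otherwise it lies in the proper subgroup obtained for a = b = gcd(a, b). The automorphism
   fixing \<omega> and sending \<omega>^k j to \<omega>^(k-s) j moves s to 0, and right multiplication by the element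
   \<omega>^(s+n) j of the system swaps the roles of a and b. Finally 2n/a + 2n/b = 2n(a + b)/(ab) with
   (a + b)/(ab) in lowest terms, so the cardinality determines a + b and ab, hence the pair a \<le> b. *)

definition angle :: "nat \<Rightarrow> int \<Rightarrow> real" where
  "angle n k = of_int k * pi / real n"

definition rot :: "nat \<Rightarrow> int \<Rightarrow> quat" where
  "rot n k = Quat (cos (angle n k)) (sin (angle n k)) 0 0"

definition rotj :: "nat \<Rightarrow> int \<Rightarrow> quat" where
  "rotj n k = Quat 0 0 (cos (angle n k)) (sin (angle n k))"

lemma angle_add: "angle n (p + q) = angle n p + angle n q"
  by (simp add: angle_def add_divide_distrib distrib_right)

lemma angle_diff: "angle n (p - q) = angle n p - angle n q"
  by (simp add: angle_def diff_divide_distrib left_diff_distrib)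

lemma angle_self: "n > 0 \<Longrightarrow> angle n (int n) = pi"
  by (simp add: angle_def)

lemma rot_mult_rot: "rot n p * rot n q = rot n (p + q)"
  by (simp add: rot_def times_quat_def angle_add cos_add sin_add)

lemma rot_mult_rotj: "rot n p * rotj n q = rotj n (p + q)"
  by (simp add: rot_def rotj_def times_quat_def angle_add cos_add sin_add)

lemma rotj_mult_rot: "rotj n p * rot n q = rotj n (p - q)"
  by (simp add: rot_def rotj_def times_quat_def angle_diff cos_diff sin_diff)

lemma rotj_mult_rotj: "n > 0 \<Longrightarrow> rotj n p * rotj n q = rot n (p - q + int n)"
  by (simp add: rot_def rotj_def times_quat_def angle_diff angle_add angle_self cos_diff sin_diff)

lemma inverse_rot: "inverse (rot n p) = rot n (- p)"
  by (simp add: rot_def inverse_quat_def angle_def)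

lemma inverse_rotj: "n > 0 \<Longrightarrow> inverse (rotj n p) = rotj n (p + int n)"
  by (simp add: rotj_def inverse_quat_def angle_add angle_self)

lemma rot_0: "rot n 0 = 1"
  by (simp add: rot_def one_quat_def angle_def)

lemma rotj_0: "rotj n 0 = qj"
  by (simp add: rotj_def qj_def angle_def)

lemma rot_1: "rot n 1 = omega n"
  by (simp add: rot_def omega_def angle_def)

lemma rotj_eq_rot_mult_qj: "rotj n k = rot n k * qj"
  using rot_mult_rotj[of n k 0] by (simp add: rotj_0)

lemma omega_power: "omega n ^ m = rot n (int m)"
  by (induction m) (simp_all add: rot_0 rot_mult_rot mult.commute flip: rot_1)

lemma rot_neq_rotj: "rot n p \<noteq> rotj n q"
proof
  assume "rot n p = rotj n q"
  then have "cos (angle n p) = 0" "sin (angle n p) = 0" by (simp_all add: rot_def rotj_def)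
  then show False using sin_cos_squared_add[of "angle n p"] by simp
qed

lemma rot_eq_rot_iff:
  assumes "n > 0"
  shows "rot n p = rot n q \<longleftrightarrow> 2 * int n dvd p - q"
proof
  assume "rot n p = rot n q"
  then have "cos (angle n p) = cos (angle n q)" "sin (angle n p) = sin (angle n q)"
    by (simp_all add: rot_def)
  then have "cos (angle n (p - q)) = 1"
    using sin_cos_squared_add[of "angle n q"] by (simp add: angle_diff cos_diff power2_eq_square)
  then obtain m :: int where "angle n (p - q) = of_int m * 2 * pi"
    using cos_one_2pi_int by blast
  then have "pi * of_int (p - q) = pi * of_int (m * 2 * int n)"
    using assms by (simp add: angle_def field_simps)
  then have "p - q = m * 2 * int n"
    by (simp only: mult_cancel_left pi_neq_zero of_int_eq_iff simp_thms)
  then show "2 * int n dvd p - q"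
    by simp
next
  assume "2 * int n dvd p - q"
  then obtain m where "p = q + 2 * int n * m"
    by (metis dvd_def add.commute diff_add_cancel)
  moreover have "angle n (2 * int n * m) = of_int m * (2 * pi)"
    using assms by (simp add: angle_def)
  ultimately have "angle n p = angle n q + of_int m * (2 * pi)"
    by (simp add: angle_add)
  then show "rot n p = rot n q"
    by (simp add: rot_def cos_add sin_add mult.commute[of _ "2 * pi"])
qed

lemma rotj_eq_rotj_iff: "n > 0 \<Longrightarrow> rotj n p = rotj n q \<longleftrightarrow> 2 * int n dvd p - q"
  using rot_eq_rot_iff[of n p q] by (simp add: rot_def rotj_def)

definition dic_elems :: "nat \<Rightarrow> quat set" where
  "dic_elems n = range (rot n) \<union> range (rotj n)"

lemma qgen_least:
  assumes "X \<subseteq> Y" "1 \<in> Y" "\<And>x y. x \<in> Y \<Longrightarrow> y \<in> Y \<Longrightarrow> x * y \<in> Y"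
    "\<And>x. x \<in> Y \<Longrightarrow> inverse x \<in> Y"
  shows "qgen X \<subseteq> Y"
proof
  fix x
  assume "x \<in> qgen X"
  then show "x \<in> Y" by induction (use assms in auto)
qed

lemma qgen_mono: "X \<subseteq> Y \<Longrightarrow> qgen X \<subseteq> qgen Y"
  by (rule qgen_least) (auto intro: qgen.intros)

lemma qgen_subset_dic_elems:
  assumes "n > 0" "X \<subseteq> dic_elems n"
  shows "qgen X \<subseteq> dic_elems n"
proof (rule qgen_least)
  show "1 \<in> dic_elems n"
    by (metis UnI1 dic_elems_def rangeI rot_0)
qed (use assms in \<open>auto simp: dic_elems_def rot_mult_rot rot_mult_rotj rotj_mult_rot
                     rotj_mult_rotj inverse_rot inverse_rotj\<close>)

lemma rot_multiple_in_qgen: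
  assumes "rot n a \<in> qgen X"
  shows "rot n (k * a) \<in> qgen X"
proof (induction k rule: int_induct[of _ 0])
  case base
  then show ?case by (simp add: rot_0 qgen.one)
next
  case (step1 i)
  have "rot n ((i + 1) * a) = rot n (i * a) * rot n a"
    by (simp add: rot_mult_rot algebra_simps)
  with step1 assms show ?case by (metis qgen.mult)
next
  case (step2 i)
  have "rot n ((i - 1) * a) = rot n (i * a) * inverse (rot n a)"
    by (simp add: rot_mult_rot inverse_rot algebra_simps)
  with step2 assms show ?case by (metis qgen.mult qgen.inv)
qed

lemma dic_elems_subset_qgen:
  assumes "omega n \<in> qgen X" "qj \<in> qgen X"
  shows "dic_elems n \<subseteq> qgen X"
proof
  fix x
  assume "x \<in> dic_elems n"
  then obtain k where "x = rot n k \<or> x = rot n k * qj"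
    by (auto simp: dic_elems_def rotj_eq_rot_mult_qj)
  moreover have "rot n k \<in> qgen X"
    using rot_multiple_in_qgen[of n 1 X k] assms(1) by (simp add: rot_1)
  ultimately show "x \<in> qgen X" using assms(2) by (metis qgen.mult)
qed

lemma Dic_eq_dic_elems:
  assumes "n > 0"
  shows "Dic n = dic_elems n"
proof
  have "omega n \<in> dic_elems n" "qj \<in> dic_elems n"
    unfolding dic_elems_def using rangeI[of "rot n" 1] rangeI[of "rotj n" 0]
    by (simp_all add: rot_1 rotj_0)
  then show "Dic n \<subseteq> dic_elems n"
    unfolding Dic_def by (intro qgen_subset_dic_elems assms) auto
  show "dic_elems n \<subseteq> Dic n"
    unfolding Dic_def by (rule dic_elems_subset_qgen) (auto intro: qgen.base)
qed

lemma qcirc_rot_rot: "qcirc (rot n p) (rot n q) = rot n (2 * p - q)"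
  by (simp add: qcirc_def inverse_rot rot_mult_rot)

lemma qcirc_rotj_rotj: "n > 0 \<Longrightarrow> qcirc (rotj n p) (rotj n q) = rotj n (2 * p - q)"
  by (simp add: qcirc_def inverse_rotj rotj_mult_rotj rot_mult_rotj)

lemma qcirc_rot_rotj: "n > 0 \<Longrightarrow> qcirc (rot n p) (rotj n q) = rotj n (q + int n)"
  by (simp add: qcirc_def inverse_rotj rotj_mult_rot rot_mult_rotj)

lemma qcirc_rotj_rot: "n > 0 \<Longrightarrow> qcirc (rotj n p) (rot n q) = rot n (q + int n)"
  by (simp add: qcirc_def inverse_rot rotj_mult_rotj rotj_mult_rot)

lemma Lcl_least:
  assumes "X \<subseteq> Y" "\<And>x y. x \<in> Y \<Longrightarrow> y \<in> Y \<Longrightarrow> qcirc x y \<in> Y"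
  shows "Lcl X \<subseteq> Y"
proof
  fix x
  assume "x \<in> Lcl X"
  then show "x \<in> Y" by induction (use assms in auto)
qed

lemma multiples_mem_if_reflection_closed:
  fixes P :: "int \<Rightarrow> bool"
  assumes "P 0" "P d" and closed: "\<And>p q. P p \<Longrightarrow> P q \<Longrightarrow> P (2 * p - q)"
  shows "P (k * d)"
proof -
  have "P (i * d) \<and> P ((i + 1) * d)" for i
  proof (induction i rule: int_induct[of _ 0])
    case base
    then show ?case using assms(1,2) by simp
  next
    case (step1 i)
    have "(i + 1 + 1) * d = 2 * ((i + 1) * d) - i * d"
      by (simp add: algebra_simps)
    with step1 closed show ?case by metis
  next
    case (step2 i)
    have "(i - 1) * d = 2 * (i * d) - (i + 1) * d"
      by (simp add: algebra_simps)
    with step2 closed show ?case by (metis diff_add_cancel)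
  qed
  then show ?thesis by blast
qed

lemma reflection_closed_int_set_eq_multiples:
  fixes X :: "int set"
  assumes "0 \<in> X" "N \<in> X" "N > 0"
    and closed: "\<And>p q. p \<in> X \<Longrightarrow> q \<in> X \<Longrightarrow> 2 * p - q \<in> X"
  obtains d where "d > 0" "d dvd N" "X = {x. d dvd x}"
proof -
  define S where "S = {x \<in> X. 0 < x \<and> x \<le> N}"
  define d where "d = Min S"
  have "finite S" unfolding S_def by (rule finite_subset[of _ "{0<..N}"]) auto
  moreover have "N \<in> S" using assms by (simp add: S_def)
  ultimately have "d \<in> S" and minimal: "\<And>r. r \<in> S \<Longrightarrow> d \<le> r"
    unfolding d_def by (auto intro: Min_in Min_le)
  then have "d \<in> X" "0 < d" "d \<le> N" by (simp_all add: S_def)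
  have multiples: "k * d \<in> X" for k
    using multiples_mem_if_reflection_closed[of "\<lambda>x. x \<in> X"] assms(1) \<open>d \<in> X\<close> closed by blast
  have "d dvd x" if "x \<in> X" for x
  proof -
    define r where "r = x mod (2 * d)"
    have "r = 2 * 0 - (2 * ((x div (2 * d)) * d) - x)"
      by (simp add: r_def minus_div_mult_eq_mod[symmetric] algebra_simps)
    then have "r \<in> X" using closed assms(1) multiples \<open>x \<in> X\<close> by metis
    moreover have "2 * d - r \<in> X" using closed \<open>d \<in> X\<close> \<open>r \<in> X\<close> by blast
    moreover have "0 \<le> r" "r < 2 * d" using \<open>0 < d\<close> by (simp_all add: r_def)
    ultimately have "r = 0 \<or> r = d"
      using minimal[of r] minimal[of "2 * d - r"] \<open>d \<le> N\<close> unfolding S_def by fastforce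
    moreover have "d dvd x - r"
      unfolding r_def by (simp add: minus_mod_eq_mult_div)
    ultimately show ?thesis
      by (metis diff_0_right dvd_refl dvd_add_left_iff diff_add_cancel)
  qed
  with multiples have "X = {x. d dvd x}"
    by (auto elim!: dvdE simp: mult.commute)
  with \<open>0 < d\<close> \<open>N \<in> X\<close> that show thesis
    by blast
qed

definition rs_form :: "nat \<Rightarrow> int \<Rightarrow> int \<Rightarrow> int \<Rightarrow> quat set" where
  "rs_form n a s b = range (\<lambda>k. rot n (k * a)) \<union> range (\<lambda>k. rotj n (s + k * b))"

lemma rot_in_rs_form: "rot n (k * a) \<in> rs_form n a s b"
  by (simp add: rs_form_def)

lemma rotj_in_rs_form: "rotj n (s + k * b) \<in> rs_form n a s b"
  by (simp add: rs_form_def)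

lemma rs_form_subset_dic_elems: "rs_form n a s b \<subseteq> dic_elems n"
  by (auto simp: rs_form_def dic_elems_def)

lemma rs_form_mono:
  assumes "g dvd a" "g dvd b"
  shows "rs_form n a s b \<subseteq> rs_form n g s g"
proof
  fix x
  assume "x \<in> rs_form n a s b"
  then obtain k where "x = rot n (k * a) \<or> x = rotj n (s + k * b)"
    unfolding rs_form_def by blast
  moreover obtain a' b' where "a = g * a'" "b = g * b'"
    using assms by (elim dvdE)
  ultimately show "x \<in> rs_form n g s g"
    using rot_in_rs_form[of n "k * a'" g s g] rotj_in_rs_form[of n s "k * b'" g g]
    by (auto simp: ac_simps)
qed

lemma rs_form_qcirc_closed:
  assumes "n > 0" "a dvd int n" "b dvd int n"
    and "x \<in> rs_form n a s b" "y \<in> rs_form n a s b"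
  shows "qcirc x y \<in> rs_form n a s b"
proof -
  obtain u v where u: "int n = u * a" and v: "int n = v * b"
    using assms(2,3) by (metis dvd_def mult.commute)
  obtain k where x: "x = rot n (k * a) \<or> x = rotj n (s + k * b)"
    using assms(4) unfolding rs_form_def by blast
  obtain l where y: "y = rot n (l * a) \<or> y = rotj n (s + l * b)"
    using assms(5) unfolding rs_form_def by blast
  have "qcirc (rot n (k * a)) (rot n (l * a)) = rot n ((2 * k - l) * a)"
    by (simp add: qcirc_rot_rot algebra_simps)
  moreover have "qcirc (rot n (k * a)) (rotj n (s + l * b)) = rotj n (s + (l + v) * b)"
    using assms(1) by (simp add: qcirc_rot_rotj v algebra_simps)
  moreover have "qcirc (rotj n (s + k * b)) (rot n (l * a)) = rot n ((l + u) * a)"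
    using assms(1) by (simp add: qcirc_rotj_rot u algebra_simps)
  moreover have "qcirc (rotj n (s + k * b)) (rotj n (s + l * b)) = rotj n (s + (2 * k - l) * b)"
    using assms(1) by (simp add: qcirc_rotj_rotj algebra_simps)
  ultimately show ?thesis
    using x y by (elim disjE) (simp_all only: rot_in_rs_form rotj_in_rs_form)
qed

lemma Lcl_generators_eq_rs_form:
  assumes "n > 0" "a dvd int n" "b dvd int n"
  shows "Lcl {1, rot n a, rotj n 0, rotj n b} = rs_form n a 0 b"
proof
  have "{1, rot n a, rotj n 0, rotj n b} \<subseteq> rs_form n a 0 b"
    using rot_in_rs_form[of n 0 a 0 b] rot_in_rs_form[of n 1 a 0 b]
      rotj_in_rs_form[of n 0 0 b] rotj_in_rs_form[of n 0 1 b]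
    by (simp add: rot_0)
  then show "Lcl {1, rot n a, rotj n 0, rotj n b} \<subseteq> rs_form n a 0 b"
    using rs_form_qcirc_closed[OF assms] by (intro Lcl_least) auto
next
  let ?L = "Lcl {1, rot n a, rotj n 0, rotj n b}"
  have "rot n (k * a) \<in> ?L" for k
    by (rule multiples_mem_if_reflection_closed[where P = "\<lambda>t. rot n t \<in> ?L"])
      (auto simp: rot_0 qcirc_rot_rot[symmetric] intro: Lcl.base intro!: Lcl.circ)
  moreover have "rotj n (k * b) \<in> ?L" for k
    by (rule multiples_mem_if_reflection_closed[where P = "\<lambda>t. rotj n t \<in> ?L"])
      (auto simp: qcirc_rotj_rotj[OF assms(1), symmetric] intro: Lcl.base intro!: Lcl.circ)
  ultimately show "rs_form n a 0 b \<subseteq> ?L"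
    by (auto simp: rs_form_def)
qed

lemma Lab_eq_rs_form:
  assumes "n > 0" "a dvd n" "b dvd n"
  shows "Lab n a b = rs_form n (int a) 0 (int b)"
proof -
  have "Lab n a b = Lcl {1, rot n (int a), rotj n 0, rotj n (int b)}"
    by (simp add: Lab_def omega_power rotj_eq_rot_mult_qj rot_0)
  also have "\<dots> = rs_form n (int a) 0 (int b)"
    using assms by (intro Lcl_generators_eq_rs_form) auto
  finally show ?thesis .
qed

lemma qgen_rs_form_self:
  assumes "n > 0" "g dvd int n"
  shows "qgen (rs_form n g s g) = rs_form n g s g"
proof
  show "rs_form n g s g \<subseteq> qgen (rs_form n g s g)"
    by (auto intro: qgen.base)
  obtain v where v: "int n = v * g"
    using assms(2) by (metis dvd_def mult.commute)
  have mult: "x * y \<in> rs_form n g s g" if hx: "x \<in> rs_form n g s g" and hy: "y \<in> rs_form n g s g" for x y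
  proof -
    obtain k where x: "x = rot n (k * g) \<or> x = rotj n (s + k * g)"
      using hx unfolding rs_form_def by blast
    obtain l where y: "y = rot n (l * g) \<or> y = rotj n (s + l * g)"
      using hy unfolding rs_form_def by blast
    have "rot n (k * g) * rot n (l * g) = rot n ((k + l) * g)"
      "rot n (k * g) * rotj n (s + l * g) = rotj n (s + (k + l) * g)"
      "rotj n (s + k * g) * rot n (l * g) = rotj n (s + (k - l) * g)"
      "rotj n (s + k * g) * rotj n (s + l * g) = rot n ((k - l + v) * g)"
      using assms(1) by (simp_all add: rot_mult_rot rot_mult_rotj rotj_mult_rot rotj_mult_rotj v
          algebra_simps)
    then show ?thesis
      using x y by (elim disjE) (simp_all only: rot_in_rs_form rotj_in_rs_form)
  qed
  have inverse: "inverse x \<in> rs_form n g s g" if hx: "x \<in> rs_form n g s g" for x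
  proof -
    obtain k where x: "x = rot n (k * g) \<or> x = rotj n (s + k * g)"
      using hx unfolding rs_form_def by blast
    have "inverse (rot n (k * g)) = rot n ((- k) * g)"
      "inverse (rotj n (s + k * g)) = rotj n (s + (k + v) * g)"
      using assms(1) by (simp_all add: inverse_rot inverse_rotj v algebra_simps)
    then show ?thesis
      using x by (elim disjE) (simp_all only: rot_in_rs_form rotj_in_rs_form)
  qed
  show "qgen (rs_form n g s g) \<subseteq> rs_form n g s g"
    using mult inverse rot_in_rs_form[of n 0 g s g] by (intro qgen_least) (auto simp: rot_0)
qed

lemma qgen_rs_form_eq_dic_elems_iff:
  assumes "n > 0" "a dvd int n"
  shows "qgen (rs_form n a s b) = dic_elems n \<longleftrightarrow> coprime a b"
proof
  assume generates: "qgen (rs_form n a s b) = dic_elems n"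
  define g where "g = gcd a b"
  have "g dvd int n"
    using assms(2) unfolding g_def by (meson dvd_trans gcd_dvd1)
  have "qgen (rs_form n a s b) \<subseteq> rs_form n g s g"
    using qgen_mono[OF rs_form_mono[of g a b n s]] qgen_rs_form_self[OF assms(1) \<open>g dvd int n\<close>]
    by (simp add: g_def)
  with generates have "rot n 1 \<in> rs_form n g s g"
    by (auto simp: dic_elems_def)
  then obtain k where "rot n 1 = rot n (k * g)"
    by (auto simp: rs_form_def rot_neq_rotj)
  then have "2 * int n dvd 1 - k * g"
    using rot_eq_rot_iff[OF assms(1)] by blast
  with \<open>g dvd int n\<close> have "g dvd 1 - k * g"
    by (meson dvd_trans dvd_triv_right)
  then have "g dvd 1"
    by (metis diff_add_cancel dvd_add dvd_triv_right)
  then show "coprime a b"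
    by (simp add: g_def coprime_iff_gcd_eq_1)
next
  assume "coprime a b"
  let ?X = "rs_form n a s b"
  have rotj_s: "rotj n s \<in> qgen ?X"
    using rotj_in_rs_form[of n s 0 b a] by (auto intro: qgen.base)
  have "rot n a \<in> qgen ?X"
    using rot_in_rs_form[of n 1 a s b] by (auto intro: qgen.base)
  moreover have "rot n b \<in> qgen ?X"
  proof -
    have "rot n b = rotj n (s + 1 * b) * inverse (rotj n s)"
      using assms(1) by (simp add: inverse_rotj rotj_mult_rotj)
    then show ?thesis
      using rotj_s rotj_in_rs_form[of n s 1 b a] by (metis qgen.base qgen.mult qgen.inv)
  qed
  moreover obtain u v where "u * a + v * b = 1"
    using \<open>coprime a b\<close> bezout_int[of a b] by (auto simp: coprime_iff_gcd_eq_1)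
  ultimately have "rot n 1 \<in> qgen ?X"
    using rot_multiple_in_qgen[of n a ?X u] rot_multiple_in_qgen[of n b ?X v]
    by (metis qgen.mult rot_mult_rot)
  moreover have "qj = rot n (- s * 1) * rotj n s"
    by (simp add: rot_mult_rotj rotj_0)
  ultimately have "omega n \<in> qgen ?X" "qj \<in> qgen ?X"
    using rotj_s rot_multiple_in_qgen[of n 1 ?X "- s"] by (simp add: rot_1, metis qgen.mult)
  then show "qgen ?X = dic_elems n"
    using dic_elems_subset_qgen qgen_subset_dic_elems[OF assms(1) rs_form_subset_dic_elems]
    by blast
qed

definition refl_shift :: "nat \<Rightarrow> int \<Rightarrow> quat \<Rightarrow> quat" where
  "refl_shift n t q = (if q \<in> range (rotj n) then q * rot n t else q)"

lemma refl_shift_rot: "refl_shift n t (rot n k) = rot n k"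
  by (auto simp: refl_shift_def rot_neq_rotj)

lemma refl_shift_rotj: "refl_shift n t (rotj n k) = rotj n (k - t)"
  by (simp add: refl_shift_def rotj_mult_rot)

lemma group_aut_refl_shift:
  assumes "n > 0"
  shows "group_aut (Dic n) (refl_shift n t)"
proof -
  have elem_cases: "P x" if "x \<in> dic_elems n" "\<And>k. P (rot n k)" "\<And>k. P (rotj n k)" for P x
    using that by (auto simp: dic_elems_def)
  have "bij_betw (refl_shift n t) (dic_elems n) (dic_elems n)"
    by (rule bij_betw_byWitness[where f' = "refl_shift n (- t)"])
      (auto elim!: elem_cases simp: refl_shift_rot refl_shift_rotj dic_elems_def)
  moreover have "refl_shift n t (x * y) = refl_shift n t x * refl_shift n t y"
    if "x \<in> dic_elems n" "y \<in> dic_elems n" for x y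
    using that assms
    by (elim elem_cases) (simp_all add: refl_shift_rot refl_shift_rotj rot_mult_rot rot_mult_rotj
        rotj_mult_rot rotj_mult_rotj algebra_simps)
  ultimately show ?thesis
    unfolding group_aut_def Dic_eq_dic_elems[OF assms] by blast
qed

lemma refl_shift_image_rs_form: "refl_shift n t ` rs_form n a s b = rs_form n a (s - t) b"
  unfolding rs_form_def image_Un image_image by (simp add: refl_shift_rot refl_shift_rotj algebra_simps)

lemma rs_form_mult_rotj:
  assumes "n > 0"
  shows "(\<lambda>y. y * rotj n (s + int n)) ` rs_form n a s b = rs_form n b (s + int n) a"
  unfolding rs_form_def image_Un image_image
  using assms by (simp add: rot_mult_rotj rotj_mult_rotj algebra_simps Un_commute)

lemma rs_equivalent_rs_form_shift:
  assumes "n > 0"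
  shows "rs_equivalent (Dic n) (rs_form n a s b) (rs_form n a 0 b)"
proof -
  have "1 \<in> rs_form n a s b"
    using rot_in_rs_form[of n 0 a s b] by (simp add: rot_0)
  moreover have "rs_form n a 0 b = refl_shift n s ` (\<lambda>y. 1 * y) ` rs_form n a s b"
    by (simp add: refl_shift_image_rs_form)
  ultimately show ?thesis
    unfolding rs_equivalent_def using group_aut_refl_shift[OF assms] by blast
qed

lemma rs_equivalent_rs_form_swap:
  assumes "n > 0" "b dvd int n"
  shows "rs_equivalent (Dic n) (rs_form n a s b) (rs_form n b 0 a)"
proof -
  have "rotj n (s + int n) \<in> rs_form n a s b"
    using assms(2) rotj_in_rs_form by (metis dvdE mult.commute)
  moreover have "rs_form n b 0 a =
      refl_shift n (s + int n) ` (\<lambda>y. y * rotj n (s + int n)) ` rs_form n a s b"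
    by (simp add: rs_form_mult_rotj[OF assms(1)] refl_shift_image_rs_form)
  ultimately show ?thesis
    unfolding rs_equivalent_def using group_aut_refl_shift[OF assms(1)] by blast
qed

lemma reflection_system_contains_rotj:
  assumes "n > 0" "reflection_system (Dic n) L"
  shows "\<exists>s. rotj n s \<in> L"
proof (rule ccontr)
  assume "\<nexists>s. rotj n s \<in> L"
  moreover have "L \<subseteq> dic_elems n" "qgen L = dic_elems n"
    using assms unfolding reflection_system_def Dic_eq_dic_elems[OF assms(1)] by auto
  ultimately have "L \<subseteq> range (rot n)"
    by (auto simp: dic_elems_def)
  then have "qgen L \<subseteq> range (rot n)"
    by (rule qgen_least) (use rangeI[of "rot n" 0] in \<open>auto simp: rot_mult_rot inverse_rot rot_0\<close>)
  moreover have "rotj n 0 \<in> qgen L"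
    by (simp add: \<open>qgen L = dic_elems n\<close> dic_elems_def)
  ultimately show False
    using rot_neq_rotj by (metis imageE subsetD)
qed

lemma qcirc_closed_exponents_eq_multiples:
  assumes "n > 0" "1 \<in> L" "rotj n s \<in> L"
    and closed: "\<And>x y. x \<in> L \<Longrightarrow> y \<in> L \<Longrightarrow> qcirc x y \<in> L"
  obtains a b where "a > 0" "b > 0" "a dvd int n" "b dvd int n"
    "\<And>k. rot n k \<in> L \<longleftrightarrow> a dvd k" "\<And>k. rotj n (s + k) \<in> L \<longleftrightarrow> b dvd k"
proof -
  have "rot n 0 \<in> L" "rot n (2 * int n) \<in> L"
    using assms(2) rot_eq_rot_iff[OF assms(1), of "2 * int n" 0] by (simp_all add: rot_0)
  moreover have "rot n (2 * p - q) \<in> L" if "rot n p \<in> L" "rot n q \<in> L" for p q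
    using closed[OF that] by (simp add: qcirc_rot_rot)
  ultimately obtain a where "a > 0" "a dvd 2 * int n"
    and rot_exponents: "{k. rot n k \<in> L} = {k. a dvd k}"
    using reflection_closed_int_set_eq_multiples[of "{k. rot n k \<in> L}" "2 * int n"] assms(1) by auto
  have "rotj n (s + 0) \<in> L" "rotj n (s + 2 * int n) \<in> L"
    using assms(3) rotj_eq_rotj_iff[OF assms(1), of "s + 2 * int n" s] by simp_all
  moreover have "rotj n (s + (2 * p - q)) \<in> L" if "rotj n (s + p) \<in> L" "rotj n (s + q) \<in> L" for p q
    using closed[OF that] assms(1) by (simp add: qcirc_rotj_rotj algebra_simps)
  ultimately obtain b where "b > 0" "b dvd 2 * int n"
    and rotj_exponents: "{k. rotj n (s + k) \<in> L} = {k. b dvd k}"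
    using reflection_closed_int_set_eq_multiples[of "{k. rotj n (s + k) \<in> L}" "2 * int n"] assms(1)
    by auto
  have "rot n (0 + int n) \<in> L" "rotj n (s + int n) \<in> L"
    using closed[OF assms(3) \<open>rot n 0 \<in> L\<close>] closed[OF \<open>rot n 0 \<in> L\<close> assms(3)] assms(1)
    by (simp_all add: qcirc_rotj_rot qcirc_rot_rotj add.commute)
  then have "a dvd int n" "b dvd int n"
    using rot_exponents rotj_exponents by auto
  with \<open>a > 0\<close> \<open>b > 0\<close> rot_exponents rotj_exponents show thesis
    by (intro that) (auto simp: set_eq_iff)
qed

lemma reflection_system_eq_rs_form:
  assumes "n > 0" "reflection_system (Dic n) L"
  obtains a b :: nat and s :: int where "a dvd n" "b dvd n" "L = rs_form n (int a) s (int b)"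
proof -
  obtain s where "rotj n s \<in> L"
    using reflection_system_contains_rotj[OF assms] ..
  moreover have L_sub: "L \<subseteq> dic_elems n" and "1 \<in> L"
    and closed: "\<And>x y. x \<in> L \<Longrightarrow> y \<in> L \<Longrightarrow> qcirc x y \<in> L"
    using assms(2) unfolding reflection_system_def Dic_eq_dic_elems[OF assms(1)] by auto
  ultimately obtain a b where "a > 0" "b > 0" "a dvd int n" "b dvd int n"
    and rot_iff: "\<And>k. rot n k \<in> L \<longleftrightarrow> a dvd k"
    and rotj_iff: "\<And>k. rotj n (s + k) \<in> L \<longleftrightarrow> b dvd k"
    using qcirc_closed_exponents_eq_multiples[OF assms(1)] by metis
  have "L = rs_form n a s b"
  proof (intro equalityI subsetI)
    fix x
    assume "x \<in> L"
    with L_sub obtain k where "x = rot n k \<or> x = rotj n (s + (k - s))"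
      by (auto simp: dic_elems_def)
    then show "x \<in> rs_form n a s b"
    proof
      assume "x = rot n k"
      with \<open>x \<in> L\<close> obtain j where "k = j * a"
        using rot_iff by (metis dvdE mult.commute)
      with \<open>x = rot n k\<close> show ?thesis
        by (simp add: rot_in_rs_form)
    next
      assume "x = rotj n (s + (k - s))"
      with \<open>x \<in> L\<close> obtain j where "k - s = j * b"
        using rotj_iff by (metis dvdE mult.commute)
      with \<open>x = rotj n (s + (k - s))\<close> show ?thesis
        by (simp add: rotj_in_rs_form)
    qed
  next
    fix x
    assume "x \<in> rs_form n a s b"
    with rot_iff rotj_iff show "x \<in> L"
      by (auto simp: rs_form_def)
  qed
  moreover have "a = int (nat a)" "b = int (nat b)"
    using \<open>a > 0\<close> \<open>b > 0\<close> by simp_all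
  ultimately show thesis
    using that[of "nat a" "nat b" s] \<open>a dvd int n\<close> \<open>b dvd int n\<close> by (metis of_nat_dvd_iff)
qed

lemma reflection_system_equivalent_Lab:
  assumes "n > 0" "reflection_system (Dic n) L"
  shows "\<exists>(a, b) \<in> Omega n. rs_equivalent (Dic n) L (Lab n a b)"
proof -
  obtain a b s where ab: "a dvd n" "b dvd n" and L: "L = rs_form n (int a) s (int b)"
    using reflection_system_eq_rs_form[OF assms] .
  have "coprime a b"
    using assms(2) qgen_rs_form_eq_dic_elems_iff[OF assms(1), of "int a" s "int b"] ab(1)
    unfolding L reflection_system_def Dic_eq_dic_elems[OF assms(1)] by simp
  have in_Omega: "(x, y) \<in> Omega n"
    if "x \<le> y" "x dvd n" "y dvd n" "coprime x y" for x y
    using that assms(1) unfolding Omega_def by (auto intro: dvd_imp_le Suc_leI gr0I)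
  show ?thesis
  proof (cases "a \<le> b")
    case True
    then have "(a, b) \<in> Omega n"
      using in_Omega ab \<open>coprime a b\<close> by blast
    moreover have "rs_equivalent (Dic n) L (Lab n a b)"
      unfolding L Lab_eq_rs_form[OF assms(1) ab] by (rule rs_equivalent_rs_form_shift[OF assms(1)])
    ultimately show ?thesis by blast
  next
    case False
    then have "(b, a) \<in> Omega n"
      using in_Omega ab \<open>coprime a b\<close> by (simp add: coprime_commute)
    moreover have "rs_equivalent (Dic n) L (Lab n b a)"
      unfolding L Lab_eq_rs_form[OF assms(1) ab(2,1)]
      using ab(2) by (intro rs_equivalent_rs_form_swap[OF assms(1)]) simp
    ultimately show ?thesis by blast
  qed
qed

lemma reflection_system_Lab:
  assumes "n > 0" "a dvd n" "b dvd n" "coprime a b"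
  shows "reflection_system (Dic n) (Lab n a b)"
proof -
  have "Lab n a b \<subseteq> dic_elems n" "qgen (Lab n a b) = dic_elems n"
    using assms rs_form_subset_dic_elems qgen_rs_form_eq_dic_elems_iff[OF assms(1), of "int a" 0 "int b"]
    by (simp_all add: Lab_eq_rs_form)
  moreover have "1 \<in> Lab n a b" "\<forall>x\<in>Lab n a b. \<forall>y\<in>Lab n a b. qcirc x y \<in> Lab n a b"
    unfolding Lab_def by (auto intro: Lcl.intros)
  ultimately show ?thesis
    unfolding reflection_system_def Dic_eq_dic_elems[OF assms(1)] by blast
qed

lemma bij_betw_periodic_multiples:
  fixes f :: "int \<Rightarrow> 'a" and a N :: nat
  assumes periodic: "\<And>p q. f p = f q \<longleftrightarrow> int N dvd p - q" and "a dvd N" "N > 0"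
  shows "bij_betw (\<lambda>m. f (int (m * a))) {1..N div a} (range (\<lambda>k. f (k * int a)))"
proof -
  define K where "K = N div a"
  have "N = K * a"
    using assms(2) by (simp add: K_def)
  then have N: "int N = int K * int a"
    by simp
  have "K > 0" "a > 0"
    using assms(3) \<open>N = K * a\<close> by simp_all
  have "inj_on (\<lambda>m. f (int (m * a))) {1..K}"
  proof (rule inj_onI)
    fix x y
    assume "x \<in> {1..K}" "y \<in> {1..K}" "f (int (x * a)) = f (int (y * a))"
    then have "int K * int a dvd (int x - int y) * int a"
      using periodic N by (simp add: algebra_simps)
    with \<open>a > 0\<close> have "int K dvd int x - int y"
      by simp
    moreover have "\<bar>int x - int y\<bar> < int K"
      using \<open>x \<in> {1..K}\<close> \<open>y \<in> {1..K}\<close> by auto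
    ultimately show "x = y"
      using dvd_imp_le_int[of "int x - int y" "int K"] by fastforce
  qed
  moreover have "range (\<lambda>k. f (k * int a)) \<subseteq> (\<lambda>m. f (int (m * a))) ` {1..K}"
  proof
    fix q
    assume "q \<in> range (\<lambda>k. f (k * int a))"
    then obtain k where q: "q = f (k * int a)"
      by blast
    define m where "m = nat ((k - 1) mod int K) + 1"
    have m: "int m = (k - 1) mod int K + 1"
      using \<open>K > 0\<close> by (simp add: m_def)
    moreover have "(k - 1) mod int K < int K"
      using \<open>K > 0\<close> by simp
    ultimately have "m \<le> K"
      by linarith
    then have "m \<in> {1..K}"
      by (simp add: m_def)
    have "k * int a - int (m * a) = (k - 1 - (k - 1) mod int K) * int a"
      using m by (simp add: algebra_simps)
    also have "\<dots> = int N * ((k - 1) div int K)"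
      by (simp add: minus_mod_eq_mult_div N)
    finally have "q = f (int (m * a))"
      using periodic q by (metis dvd_triv_left)
    with \<open>m \<in> {1..K}\<close> show "q \<in> (\<lambda>m. f (int (m * a))) ` {1..K}"
      by blast
  qed
  ultimately show ?thesis
    unfolding bij_betw_def K_def by auto
qed

lemma Lab_eq_omega_powers:
  assumes "n > 0" "a dvd n" "b dvd n"
  shows "Lab n a b =
           {omega n ^ (m * a) | m. 1 \<le> m \<and> m \<le> 2 * n div a}
           \<union> {omega n ^ (l * b) * qj | l. 1 \<le> l \<and> l \<le> 2 * n div b}"
proof -
  have "range (\<lambda>k. rot n (k * int a)) = (\<lambda>m. rot n (int (m * a))) ` {1..2 * n div a}"
    using bij_betw_periodic_multiples[of "rot n" "2 * n" a] rot_eq_rot_iff[OF assms(1)] assms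
    by (simp add: bij_betw_def)
  moreover have "range (\<lambda>k. rotj n (k * int b)) = (\<lambda>m. rotj n (int (m * b))) ` {1..2 * n div b}"
    using bij_betw_periodic_multiples[of "rotj n" "2 * n" b] rotj_eq_rotj_iff[OF assms(1)] assms
    by (simp add: bij_betw_def)
  ultimately show ?thesis
    unfolding Lab_eq_rs_form[OF assms] rs_form_def by (auto simp: omega_power rotj_eq_rot_mult_qj)
qed

lemma card_rs_form:
  assumes "n > 0" "a dvd 2 * n" "b dvd 2 * n"
  shows "card (rs_form n (int a) s (int b)) = 2 * n div a + 2 * n div b"
proof -
  have bij: "bij_betw (\<lambda>m. rot n (int (m * a))) {1..2 * n div a} (range (\<lambda>k. rot n (k * int a)))"
    using assms rot_eq_rot_iff[OF assms(1)] by (intro bij_betw_periodic_multiples) auto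
  then have rots: "finite (range (\<lambda>k. rot n (k * int a)))"
    "card (range (\<lambda>k. rot n (k * int a))) = 2 * n div a"
    using bij_betw_finite[OF bij] bij_betw_same_card[OF bij] by simp_all
  have bij': "bij_betw (\<lambda>m. rotj n (s + int (m * b))) {1..2 * n div b}
      (range (\<lambda>k. rotj n (s + k * int b)))"
    using assms rotj_eq_rotj_iff[OF assms(1)]
    by (intro bij_betw_periodic_multiples[where f = "\<lambda>k. rotj n (s + k)"]) auto
  then have rotjs: "finite (range (\<lambda>k. rotj n (s + k * int b)))"
    "card (range (\<lambda>k. rotj n (s + k * int b))) = 2 * n div b"
    using bij_betw_finite[OF bij'] bij_betw_same_card[OF bij'] by simp_all
  have "range (\<lambda>k. rot n (k * int a)) \<inter> range (\<lambda>k. rotj n (s + k * int b)) = {}"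
    using rot_neq_rotj by blast
  with rots rotjs show ?thesis
    unfolding rs_form_def by (simp add: card_Un_disjoint)
qed

lemma coprime_add_mult:
  fixes a b :: nat
  assumes "coprime a b"
  shows "coprime (a + b) (a * b)"
proof -
  have "gcd (a + b) a = gcd b a" "gcd (a + b) b = gcd a b"
    by (metis add.commute gcd_add1)+
  then have "coprime (a + b) a" "coprime (a + b) b"
    using assms by (simp_all add: coprime_iff_gcd_eq_1 gcd.commute)
  then show ?thesis by simp
qed

lemma ordered_pair_eq_of_sum_prod:
  fixes a b c d :: nat
  assumes "a \<le> b" "c \<le> d" "a + b = c + d" "a * b = c * d"
  shows "a = c \<and> b = d"
proof -
  have square: "(int y - int x)\<^sup>2 = (int (x + y))\<^sup>2 - 4 * int (x * y)" for x y
    by (simp add: power2_eq_square algebra_simps)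
  have "(int b - int a)\<^sup>2 = (int d - int c)\<^sup>2"
    unfolding square assms(3,4) ..
  then have "int b - int a = int d - int c"
    using assms(1,2) by (simp add: power2_eq_iff_nonneg)
  then show ?thesis
    using assms(3) by linarith
qed

lemma coprime_pair_eq_of_div_sum_eq:
  fixes a b c d N :: nat
  assumes "N > 0" "a dvd N" "b dvd N" "c dvd N" "d dvd N" "coprime a b" "coprime c d"
    "a \<le> b" "c \<le> d" "N div a + N div b = N div c + N div d"
  shows "a = c \<and> b = d"
proof -
  have scaled: "(N div x + N div y) * (x * y) = N * (x + y)" if "x dvd N" "y dvd N" for x y
    using that by (simp add: algebra_simps)
  have "N * ((a + b) * (c * d)) = (N div a + N div b) * (a * b) * (c * d)"
    by (simp add: scaled assms(2,3))
  also have "\<dots> = (N div c + N div d) * (c * d) * (a * b)"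
    by (simp add: assms(10) ac_simps)
  also have "\<dots> = N * ((c + d) * (a * b))"
    by (simp add: scaled assms(4,5))
  finally have "(a + b) * (c * d) = (c + d) * (a * b)"
    using assms(1) by simp
  then have "a + b = c + d \<and> c * d = a * b"
    using coprime_crossproduct_nat[OF coprime_add_mult[OF assms(6)] coprime_add_mult[OF assms(7)]]
    by simp
  then show ?thesis
    using ordered_pair_eq_of_sum_prod assms(8,9) by simp
qed

theorem lemma5p2:
  fixes n :: nat
  assumes "n \<ge> 2"
  shows "(\<forall>(a, b) \<in> Omega n.
            reflection_system (Dic n) (Lab n a b) \<and>
            Lab n a b = {omega n ^ (m * a) | m. 1 \<le> m \<and> m \<le> 2 * n div a}
                        \<union> {omega n ^ (l * b) * qj | l. 1 \<le> l \<and> l \<le> 2 * n div b})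
       \<and> (\<forall>L. reflection_system (Dic n) L \<longrightarrow>
            (\<exists>(a, b) \<in> Omega n. rs_equivalent (Dic n) L (Lab n a b)))
       \<and> (\<forall>(a, b) \<in> Omega n. card (Lab n a b) = 2 * n div a + 2 * n div b)
       \<and> (\<forall>(a, b) \<in> Omega n. \<forall>(a', b') \<in> Omega n.
            (a, b) \<noteq> (a', b') \<longrightarrow> 2 * n div a + 2 * n div b \<noteq> 2 * n div a' + 2 * n div b')"
proof -
  have n: "n > 0"
    using assms by simp
  have Omega: "a dvd n" "b dvd n" "coprime a b" "a \<le> b" if "(a, b) \<in> Omega n" for a b
    using that by (simp_all add: Omega_def)
  have card: "card (Lab n a b) = 2 * n div a + 2 * n div b" if "a dvd n" "b dvd n" for a b
    using that card_rs_form[OF n, of a b 0] by (simp add: Lab_eq_rs_form[OF n])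
  have distinct: "(a, b) = (a', b')"
    if "(a, b) \<in> Omega n" "(a', b') \<in> Omega n"
      "2 * n div a + 2 * n div b = 2 * n div a' + 2 * n div b'" for a b a' b'
    using coprime_pair_eq_of_div_sum_eq[of "2 * n" a b a' b'] Omega[OF that(1)] Omega[OF that(2)]
      n that(3)
    by simp
  show ?thesis (is "?systems \<and> ?classification \<and> ?cardinality \<and> ?distinct")
  proof (intro conjI)
    show ?systems
      using reflection_system_Lab[OF n] Lab_eq_omega_powers[OF n] Omega by auto
    show ?classification
      using reflection_system_equivalent_Lab[OF n] by blast
    show ?cardinality
      using card Omega by auto
    show ?distinct
      using distinct by blast
  qed
qed

end
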